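(* Let $X$ be a self-dense (no isolated points) compact metric space and let $f\colon X\to X$ be an inner-distal, totally transitive homeomorphism. Then the set $\operatorname{Per}(f)$ of periodic points of $f$ has empty interior.
   Context: The proximal cell of $x$ is $\mathcal{P}(x)=\{y\in X\colon \inf_{n\in\mathbb{Z}} d(f^n(x),f^n(y))=0\}$; $f$ is inner-distal if $\operatorname{Int}\mathcal{P}(x)=\emptyset$ for all $x$. A homeomorphism $g$ is transitive if some orbit $\{g^n(x)\colon n\in\mathbb{Z}\}$ is dense; $f$ is totally transitive if $f^n$ is transitive for every integer $n\ge1$. $\operatorname{Per}(f)=\{p\colon f^n(p)=p$ for some integer $n\ge1\}$. *)

theory Defs
  imports "HOL-Analysis.Analysis"
begin

definition zit :: "'a set \<Rightarrow> ('a \<Rightarrow> 'a) \<Rightarrow> int \<Rightarrow> 'a \<Rightarrow> 'a" where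
  "zit X f n = (if n \<ge> 0 then f ^^ nat n else (inv_into X f) ^^ nat (- n))"

definition proximal_cell :: "'a::metric_space set \<Rightarrow> ('a \<Rightarrow> 'a) \<Rightarrow> 'a \<Rightarrow> 'a set" where
  "proximal_cell X f x = {y \<in> X. (INF n\<in>(UNIV::int set). dist (zit X f n x) (zit X f n y)) = 0}"

definition inner_distal :: "'a::metric_space set \<Rightarrow> ('a \<Rightarrow> 'a) \<Rightarrow> bool" where
  "inner_distal X f \<longleftrightarrow> (\<forall>x\<in>X. (top_of_set X) interior_of (proximal_cell X f x) = {})"

definition transitive_homeo :: "'a::metric_space set \<Rightarrow> ('a \<Rightarrow> 'a) \<Rightarrow> bool" where
  "transitive_homeo X g \<longleftrightarrow> (\<exists>x\<in>X. closure {zit X g n x | n. True} = X)"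

definition totally_transitive :: "'a::metric_space set \<Rightarrow> ('a \<Rightarrow> 'a) \<Rightarrow> bool" where
  "totally_transitive X f \<longleftrightarrow> (\<forall>n::nat. n \<ge> 1 \<longrightarrow> transitive_homeo X (f ^^ n))"

definition periodic_points :: "'a set \<Rightarrow> ('a \<Rightarrow> 'a) \<Rightarrow> 'a set" where
  "periodic_points X f = {p \<in> X. \<exists>n::nat. n \<ge> 1 \<and> (f ^^ n) p = p}"

end

theory Submission
  imports Defs "HOL-Combinatorics.Orbits"
begin

text \<open>A dense orbit must enter the open set of periodic points, so
it contains a periodic point y. Because f is invertible on X, the whole integer orbit of the
starting point then lies in the finite forward orbit of y, which is closed. Hence X, the closure
of that orbit, is finite, and a nonempty finite space has isolated points.\<close>

lemma funpow_in_invariant_set: "h ` S \<subseteq> S \<Longrightarrow> z \<in> S \<Longrightarrow> (h ^^ k) z \<in> S"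
  by (induction k) auto

lemma zit_in_invariant_set:
  assumes "f ` S \<subseteq> S" "inv_into X f ` S \<subseteq> S" "z \<in> S"
  shows "zit X f n z \<in> S"
  using funpow_in_invariant_set[OF assms(1,3)] funpow_in_invariant_set[OF assms(2,3)]
  by (simp add: zit_def)

lemma funpow_inv_into_funpow:
  assumes "bij_betw f X X" "z \<in> X"
  shows "(inv_into X f ^^ k) ((f ^^ k) z) = z"
proof (induction k)
  case (Suc k)
  have "(f ^^ k) z \<in> X"
    using assms by (intro funpow_in_invariant_set) (auto simp: bij_betw_def)
  then show ?case
    unfolding funpow_Suc_right[where f = "inv_into X f"] comp_apply
    using Suc assms(1) by (simp add: bij_betw_inv_into_left)
qed simp

lemma funpow_funpow_inv_into:
  assumes "bij_betw f X X" "z \<in> X"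
  shows "(f ^^ k) ((inv_into X f ^^ k) z) = z"
proof (induction k)
  case (Suc k)
  have "(inv_into X f ^^ k) z \<in> X"
    using assms bij_betw_inv_into[OF assms(1)]
    by (intro funpow_in_invariant_set) (auto simp: bij_betw_def)
  then show ?case
    unfolding funpow_Suc_right[where f = f] comp_apply
    using Suc assms(1) by (simp add: bij_betw_inv_into_right)
qed simp

lemma zit_uminus_zit:
  assumes "bij_betw f X X" "x \<in> X"
  shows "zit X f (- m) (zit X f m x) = x"
proof (cases "m \<ge> 0")
  case True
  then show ?thesis
    using funpow_inv_into_funpow[OF assms] by (cases "m = 0") (auto simp: zit_def)
next
  case False
  then show ?thesis
    using funpow_funpow_inv_into[OF assms] by (simp add: zit_def)
qed

lemma orbit_subset_invariant_set: "f ` S \<subseteq> S \<Longrightarrow> y \<in> S \<Longrightarrow> orbit f y \<subseteq> S"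
  by (auto simp: orbit_altdef intro: funpow_in_invariant_set)

lemma inv_into_image_orbit_subset:
  assumes "bij_betw f X X" "y \<in> X" "y \<in> orbit f y"
  shows "inv_into X f ` orbit f y \<subseteq> orbit f y"
proof
  fix t assume "t \<in> inv_into X f ` orbit f y"
  then obtain s where s: "s \<in> orbit f y" and t: "t = inv_into X f s" by blast
  have "s \<in> orbit f s"
    using assms(3) s by (rule self_in_orbit_trans)
  then obtain n where n: "0 < n" "(f ^^ n) s = s"
    by (auto simp: orbit_altdef)
  then obtain k where "n = Suc k"
    using gr0_implies_Suc by blast
  then have s_eq: "f ((f ^^ k) s) = s"
    using n(2) by simp
  have pred_in_orbit: "(f ^^ k) s \<in> orbit f y"
    using s by (rule funpow_in_orbit)
  moreover have "orbit f y \<subseteq> X"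
    using assms(1,2) by (intro orbit_subset_invariant_set) (auto simp: bij_betw_def)
  ultimately have "inv_into X f (f ((f ^^ k) s)) = (f ^^ k) s"
    using assms(1) by (auto intro: bij_betw_inv_into_left)
  then show "t \<in> orbit f y"
    using pred_in_orbit by (simp add: t s_eq)
qed

lemma periodic_point_in_own_orbit:
  assumes "y \<in> periodic_points X f"
  shows "y \<in> orbit f y"
proof -
  obtain n where "n \<ge> 1" "(f ^^ n) y = y"
    using assms unfolding periodic_points_def by blast
  then have "y = (f ^^ n) y \<and> 0 < n"
    by simp
  then show ?thesis
    unfolding orbit_altdef by blast
qed

lemma transitive_homeo_interior_periodic_points_empty:
  assumes "infinite X" "bij_betw f X X" "transitive_homeo X f"
  shows "(top_of_set X) interior_of (periodic_points X f) = {}"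
proof (rule ccontr)
  assume "(top_of_set X) interior_of (periodic_points X f) \<noteq> {}"
  then obtain T where T: "open T" "T \<inter> X \<noteq> {}" "T \<inter> X \<subseteq> periodic_points X f"
    by (metis Int_commute interior_of_subset openin_interior_of openin_open)
  obtain x where x: "x \<in> X" and dense: "closure {zit X f n x | n. True} = X"
    using assms(3) unfolding transitive_homeo_def by blast
  have invariant_X: "f ` X \<subseteq> X" "inv_into X f ` X \<subseteq> X"
    using assms(2) bij_betw_inv_into[OF assms(2)] by (auto simp: bij_betw_def)
  have "T \<inter> {zit X f n x | n. True} \<noteq> {}"
    using T(1,2) dense open_Int_closure_eq_empty by blast
  then obtain m where m: "zit X f m x \<in> T" by blast
  define y where "y = zit X f m x"
  have y: "y \<in> X"
    unfolding y_def using invariant_X x by (rule zit_in_invariant_set)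
  then have "y \<in> orbit f y"
    using m T(3) by (auto simp: y_def intro: periodic_point_in_own_orbit)
  then have finite: "finite (orbit f y)"
    and invariant: "f ` orbit f y \<subseteq> orbit f y" "inv_into X f ` orbit f y \<subseteq> orbit f y"
    using assms(2) y by (auto intro: finite_orbit orbit.step dest: inv_into_image_orbit_subset)
  have "x = zit X f (- m) y"
    unfolding y_def using assms(2) x by (rule zit_uminus_zit[symmetric])
  also have "\<dots> \<in> orbit f y"
    using invariant \<open>y \<in> orbit f y\<close> by (rule zit_in_invariant_set)
  finally have "x \<in> orbit f y" .
  then have "{zit X f n x | n. True} \<subseteq> orbit f y"
    using invariant by (auto intro: zit_in_invariant_set)
  then have "X \<subseteq> orbit f y"
    using dense finite by (metis closure_minimal finite_imp_closed)
  then show False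
    using assms(1) finite finite_subset by blast
qed

theorem theorem2p19:
  fixes X :: "'a::metric_space set" and f :: "'a \<Rightarrow> 'a"
  assumes "compact X"
    and "\<forall>x\<in>X. x islimpt X"
    and "homeomorphism X X f (inv_into X f)"
    and "inner_distal X f"
    and "totally_transitive X f"
  shows "(top_of_set X) interior_of (periodic_points X f) = {}"
proof -
  have "transitive_homeo X (f ^^ 1)"
    using assms(5) unfolding totally_transitive_def by blast
  then have transitive: "transitive_homeo X f"
    by simp
  then obtain x where "x \<in> X"
    unfolding transitive_homeo_def by blast
  then have "infinite X"
    using assms(2) islimpt_finite by blast
  moreover have "bij_betw f X X"
    using assms(3) unfolding homeomorphism_def
    by (intro bij_betw_byWitness[where f' = "inv_into X f"]) auto
  ultimately show ?thesis
    using transitive by (rule transitive_homeo_interior_periodic_points_empty)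
qed

end
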